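(* Let $\mathcal X$ be locally convex and let $\rho$ be proper, quasiconvex and lower semicontinuous. Then $\mathcal B$ is nonempty and $$\rho(X)=\sup_{\psi\in\mathcal B}\rho(X|\psi)\quad\text{for all }X\in\mathcal X.$$
   Context: Standing setup: Let $\mathcal{X}$ be a real topological vector space partially ordered by a convex cone $\mathcal{X}_+\subset\mathcal X$; write $X\ge Y$ iff $X-Y\in\mathcal X_+$. Fix $N\in\mathbb N$ and: a set $\mathcal P\subset\mathbb R^N$ with $0\in\mathcal P$; a function $V_0:\mathbb R^N\to\mathbb R$ with $V_0(0)=0$ and $V_0(x)\ge -V_0(-x)$ for all $x\in\mathbb R^N$; a map $V_1:\mathbb R^N\to\mathcal X$ with $V_1(0)=0$ and $V_1(x)\le -V_1(-x)$ for all $x\in\mathbb R^N$; a set $\mathcal A\subset\mathcal X$ with $0\in\mathcal A$ and $\mathcal A+\mathcal X_+\subset\mathcal A$. The risk measure is $\rho:\mathcal X\to[-\infty,\infty]$, $\rho(X)=\inf\{V_0(x): x\in\mathcal P,\ X+V_1(x)\in\mathcal A\}$, with $\inf\emptyset=+\infty$. $\rho$ is proper if it never takes the value $-\infty$ and is not identically $+\infty$; quasiconvex if $\rho(\lambda X+(1-\lambda)Y)\le\max\{\rho(X),\rho(Y)\}$ for $\lambda\in[0,1]$. $\mathcal X'$ is the topological dual of $\mathcal X$. For $\psi\in\mathcal X'$: $\sigma_{\mathcal A}(\psi)=\inf_{X\in\mathcal A}\psi(X)$ and $\mathcal B=\{\psi\in\mathcal X':\sigma_{\mathcal A}(\psi)>-\infty\}$.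 For $X\in\mathcal X$, $\psi\in\mathcal X'$: $\rho(X|\psi)=\inf\{\rho(Y): Y\in\mathcal X,\ \psi(Y)\le\psi(X)\}$. *)

theory Defs
  imports "HOL-Analysis.Analysis"
begin

definition topological_vector_space :: "'a::{real_vector,topological_space} itself \<Rightarrow> bool" where
  "topological_vector_space T \<longleftrightarrow>
     continuous_on UNIV (\<lambda>p::'a \<times> 'a. fst p + snd p) \<and>
     continuous_on UNIV (\<lambda>p::real \<times> 'a. fst p *\<^sub>R snd p)"

definition locally_convex :: "'a::{real_vector,topological_space} itself \<Rightarrow> bool" where
  "locally_convex T \<longleftrightarrow>
     (\<forall>U::'a set. open U \<and> 0 \<in> U \<longrightarrow> (\<exists>V. open V \<and> convex V \<and> 0 \<in> V \<and> V \<subseteq> U))"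

definition top_dual :: "('a::{real_vector,topological_space} \<Rightarrow> real) set" where
  "top_dual = {\<psi>. linear \<psi> \<and> continuous_on UNIV \<psi>}"

definition cone_le :: "'a::real_vector set \<Rightarrow> 'a \<Rightarrow> 'a \<Rightarrow> bool" where
  "cone_le C X Y \<longleftrightarrow> Y - X \<in> C"

text \<open>The risk measure rho(X) = inf { V0 x : x \<in> P, X + V1 x \<in> A }, inf of empty = +\<infinity>.\<close>
definition risk_measure ::
  "(real^'n::finite) set \<Rightarrow> (real^'n \<Rightarrow> real) \<Rightarrow> (real^'n \<Rightarrow> 'a::real_vector) \<Rightarrow> 'a set \<Rightarrow> 'a \<Rightarrow> ereal"
  where "risk_measure P V0 V1 A X = Inf {ereal (V0 x) | x. x \<in> P \<and> X + V1 x \<in> A}"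

definition support_inf :: "'a set \<Rightarrow> ('a \<Rightarrow> real) \<Rightarrow> ereal" where
  "support_inf A \<psi> = Inf ((\<lambda>X. ereal (\<psi> X)) ` A)"

definition barrier_cone :: "'a::{real_vector,topological_space} set \<Rightarrow> ('a \<Rightarrow> real) set" where
  "barrier_cone A = {\<psi> \<in> top_dual. support_inf A \<psi> > -\<infinity>}"

definition cond_risk :: "('a \<Rightarrow> ereal) \<Rightarrow> 'a \<Rightarrow> ('a \<Rightarrow> real) \<Rightarrow> ereal" where
  "cond_risk \<rho> X \<psi> = Inf {\<rho> Y | Y. \<psi> Y \<le> \<psi> X}"

definition proper_risk :: "('a \<Rightarrow> ereal) \<Rightarrow> bool" where
  "proper_risk \<rho> \<longleftrightarrow> (\<forall>X. \<rho> X \<noteq> -\<infinity>) \<and> (\<exists>X. \<rho> X \<noteq> \<infinity>)"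

definition quasiconvex_fun :: "('a::real_vector \<Rightarrow> ereal) \<Rightarrow> bool" where
  "quasiconvex_fun \<rho> \<longleftrightarrow>
     (\<forall>X Y (l::real). 0 \<le> l \<and> l \<le> 1 \<longrightarrow> \<rho> (l *\<^sub>R X + (1 - l) *\<^sub>R Y) \<le> max (\<rho> X) (\<rho> Y))"

definition lsc_fun :: "('a::topological_space \<Rightarrow> ereal) \<Rightarrow> bool" where
  "lsc_fun \<rho> \<longleftrightarrow> (\<forall>c. closed {X. \<rho> X \<le> c})"

end

theory Submission
  imports Defs
begin

text \<open>Every \<open>\<psi>\<close> satisfies \<open>\<rho>(X|\<psi>) \<le> \<rho>(X)\<close>, so only \<open>\<ge>\<close> is at stake. Given \<open>c < \<rho>(X)\<close>,
  the sublevel set \<open>K = {\<rho> \<le> c}\<close> is closed and convex and misses \<open>X\<close>, so by Hahn--Banach in the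
  locally convex space some \<open>\<psi> \<in> \<X>'\<close> strictly separates \<open>X\<close> from \<open>K\<close>; then every \<open>Y\<close> with
  \<open>\<psi>(Y) \<le> \<psi>(X)\<close> lies outside \<open>K\<close>, i.e. \<open>\<rho>(X|\<psi>) \<ge> c\<close>. If some \<open>Y\<close> has \<open>\<rho>(Y) < c\<close>, there is
  \<open>x \<in> \<P>\<close> with \<open>V\<^sub>0(x) < c\<close>, and then \<open>\<A> - V\<^sub>1(x) \<subseteq> K\<close> shows that \<open>\<psi>\<close> is bounded below
  on \<open>\<A>\<close>, i.e. \<open>\<psi> \<in> \<B>\<close>; otherwise \<open>\<psi> = 0 \<in> \<B>\<close> already works.\<close>

section \<open>Hahn--Banach for sublinear functionals\<close>

definition dominated_linear_graph :: "('a::real_vector \<Rightarrow> real) \<Rightarrow> ('a \<times> real) set \<Rightarrow> bool" where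
  "dominated_linear_graph p G \<longleftrightarrow> (0, 0) \<in> G \<and>
     (\<forall>x a b. (x, a) \<in> G \<longrightarrow> (x, b) \<in> G \<longrightarrow> a = b) \<and>
     (\<forall>x y a b. (x, a) \<in> G \<longrightarrow> (y, b) \<in> G \<longrightarrow> (x + y, a + b) \<in> G) \<and>
     (\<forall>x a c. (x, a) \<in> G \<longrightarrow> (c *\<^sub>R x, c * a) \<in> G) \<and>
     (\<forall>x a. (x, a) \<in> G \<longrightarrow> a \<le> p x)"

lemma dominated_linear_graphD:
  assumes "dominated_linear_graph p G"
  shows "(0, 0) \<in> G"
    and "(x, a) \<in> G \<Longrightarrow> (x, b) \<in> G \<Longrightarrow> a = b"
    and "(x, a) \<in> G \<Longrightarrow> (y, b) \<in> G \<Longrightarrow> (x + y, a + b) \<in> G"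
    and "(x, a) \<in> G \<Longrightarrow> (c *\<^sub>R x, c * a) \<in> G"
    and "(x, a) \<in> G \<Longrightarrow> a \<le> p x"
  using assms unfolding dominated_linear_graph_def by blast+

lemma dominated_linear_graph_Union:
  assumes "\<C> \<noteq> {}" and graphs: "\<And>G. G \<in> \<C> \<Longrightarrow> dominated_linear_graph p G"
    and chain: "\<And>G H. G \<in> \<C> \<Longrightarrow> H \<in> \<C> \<Longrightarrow> G \<subseteq> H \<or> H \<subseteq> G"
  shows "dominated_linear_graph p (\<Union>\<C>)"
proof -
  have common: "\<exists>G\<in>\<C>. u \<in> G \<and> v \<in> G" if "u \<in> \<Union>\<C>" "v \<in> \<Union>\<C>" for u v
    using that chain by blast
  note D = dominated_linear_graphD[OF graphs]
  show ?thesis unfolding dominated_linear_graph_def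
  proof (intro conjI allI impI)
    show "(0, 0) \<in> \<Union>\<C>" using assms(1) D(1) by blast
  next
    fix x a b assume "(x, a) \<in> \<Union>\<C>" "(x, b) \<in> \<Union>\<C>"
    then obtain G where "G \<in> \<C>" "(x, a) \<in> G" "(x, b) \<in> G" using common by blast
    then show "a = b" by (rule D(2))
  next
    fix x y a b assume "(x, a) \<in> \<Union>\<C>" "(y, b) \<in> \<Union>\<C>"
    then obtain G where "G \<in> \<C>" "(x, a) \<in> G" "(y, b) \<in> G" using common by blast
    then show "(x + y, a + b) \<in> \<Union>\<C>" using D(3) by blast
  next
    fix x a c assume "(x, a) \<in> \<Union>\<C>"
    then obtain G where "G \<in> \<C>" "(x, a) \<in> G" by blast
    then show "(c *\<^sub>R x, c * a) \<in> \<Union>\<C>" using D(4) by blast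
  next
    fix x a assume "(x, a) \<in> \<Union>\<C>"
    then obtain G where "G \<in> \<C>" "(x, a) \<in> G" by blast
    then show "a \<le> p x" by (rule D(5))
  qed
qed

lemma dominated_linear_graph_ray:
  fixes p :: "'a::real_vector \<Rightarrow> real"
  assumes sub: "\<And>x y. p (x + y) \<le> p x + p y"
    and hom: "\<And>r x. r \<ge> 0 \<Longrightarrow> p (r *\<^sub>R x) = r * p x"
  shows "dominated_linear_graph p (range (\<lambda>t. (t *\<^sub>R z, t * p z)))"
proof -
  have p0: "p 0 = 0" using hom[of 0 0] by simp
  show ?thesis unfolding dominated_linear_graph_def
  proof (intro conjI allI impI)
    show "(0, 0) \<in> range (\<lambda>t. (t *\<^sub>R z, t * p z))"
      by (rule image_eqI[of _ _ 0]) auto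
  next
    fix x a b assume "(x, a) \<in> range (\<lambda>t. (t *\<^sub>R z, t * p z))" "(x, b) \<in> range (\<lambda>t. (t *\<^sub>R z, t * p z))"
    then obtain t t' where "x = t *\<^sub>R z" "a = t * p z" "x = t' *\<^sub>R z" "b = t' * p z" by blast
    then show "a = b" using p0 by (metis mult_zero_right scaleR_cancel_right)
  next
    fix x y a b assume "(x, a) \<in> range (\<lambda>t. (t *\<^sub>R z, t * p z))" "(y, b) \<in> range (\<lambda>t. (t *\<^sub>R z, t * p z))"
    then obtain t t' where "x = t *\<^sub>R z" "a = t * p z" "y = t' *\<^sub>R z" "b = t' * p z" by blast
    then show "(x + y, a + b) \<in> range (\<lambda>t. (t *\<^sub>R z, t * p z))"
      by (intro image_eqI[of _ _ "t + t'"]) (simp_all add: algebra_simps)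
  next
    fix x a c assume "(x, a) \<in> range (\<lambda>t. (t *\<^sub>R z, t * p z))"
    then obtain t where "x = t *\<^sub>R z" "a = t * p z" by auto
    then show "(c *\<^sub>R x, c * a) \<in> range (\<lambda>t. (t *\<^sub>R z, t * p z))"
      by (intro image_eqI[of _ _ "c * t"]) simp_all
  next
    fix x a assume "(x, a) \<in> range (\<lambda>t. (t *\<^sub>R z, t * p z))"
    then obtain t where x: "x = t *\<^sub>R z" and a: "a = t * p z" by auto
    show "a \<le> p x"
    proof (cases "t \<ge> 0")
      case False
      have "p 0 \<le> p (t *\<^sub>R z) + p ((- t) *\<^sub>R z)"
        using sub[of "t *\<^sub>R z" "(- t) *\<^sub>R z"] by (simp add: scaleR_left_distrib[symmetric])
      then show ?thesis using hom[of "- t" z] False p0 x a by simp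
    qed (simp add: hom x a)
  qed
qed

lemma dominated_linear_graph_decomposition_unique:
  assumes G: "dominated_linear_graph p G" and z: "z \<notin> Domain G"
    and "(x, a) \<in> G" "(x', a') \<in> G" and eq: "x + t *\<^sub>R z = x' + t' *\<^sub>R z"
  shows "t = t' \<and> x = x'"
proof (cases "t = t'")
  case True
  then show ?thesis using eq by simp
next
  case False
  have "(x' + (- 1) *\<^sub>R x, a' + (- 1) * a) \<in> G"
    using dominated_linear_graphD(3,4)[OF G] assms(3,4) by blast
  then have "(x' - x, a' - a) \<in> G" by simp
  then have "((1 / (t - t')) *\<^sub>R (x' - x), (1 / (t - t')) * (a' - a)) \<in> G"
    by (rule dominated_linear_graphD(4)[OF G])
  moreover have "x' - x = (t - t') *\<^sub>R z" using eq by (simp add: algebra_simps)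
  ultimately have "(z, (1 / (t - t')) * (a' - a)) \<in> G" using False by simp
  with z show ?thesis by blast
qed

text \<open>A value \<open>c\<close> for the new direction \<open>z\<close> exists because
  \<open>a + b \<le> p (y + y') \<le> p (y - z) + p (y' + z)\<close> separates the two families of bounds.\<close>

lemma dominated_linear_graph_extension_value:
  assumes sub: "\<And>x y. p (x + y) \<le> p x + p y" and G: "dominated_linear_graph p G"
  obtains c where "\<And>y a. (y, a) \<in> G \<Longrightarrow> a - p (y - z) \<le> c"
    and "\<And>y b. (y, b) \<in> G \<Longrightarrow> c \<le> p (y + z) - b"
proof
  define S where "S = {a - p (y - z) | y a. (y, a) \<in> G}"
  have bounds: "a - p (y - z) \<le> p (y' + z) - b" if "(y, a) \<in> G" "(y', b) \<in> G" for y a y' b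
  proof -
    have "a + b \<le> p (y + y')" using dominated_linear_graphD(3,5)[OF G] that by blast
    also have "\<dots> \<le> p (y - z) + p (y' + z)" using sub[of "y - z" "y' + z"] by simp
    finally show ?thesis by simp
  qed
  have "S \<noteq> {}" and "bdd_above S"
    using dominated_linear_graphD(1)[OF G] bounds unfolding S_def bdd_above_def by blast+
  then show "a - p (y - z) \<le> Sup S" if "(y, a) \<in> G" for y a
    using that by (auto intro!: cSup_upper simp: S_def)
  show "Sup S \<le> p (y + z) - b" if "(y, b) \<in> G" for y b
    using \<open>S \<noteq> {}\<close> bounds that by (auto intro!: cSup_least simp: S_def)
qed

lemma extension_value_dominated:
  fixes p :: "'a::real_vector \<Rightarrow> real"
  assumes hom: "\<And>r x. r \<ge> 0 \<Longrightarrow> p (r *\<^sub>R x) = r * p x" and G: "dominated_linear_graph p G"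
    and lower: "\<And>y a. (y, a) \<in> G \<Longrightarrow> a - p (y - z) \<le> c"
    and upper: "\<And>y b. (y, b) \<in> G \<Longrightarrow> c \<le> p (y + z) - b"
    and xa: "(x, a) \<in> G"
  shows "a + t * c \<le> p (x + t *\<^sub>R z)"
proof (cases t "0::real" rule: linorder_cases)
  case equal
  then show ?thesis using dominated_linear_graphD(5)[OF G xa] by simp
next
  case greater
  have "c \<le> p ((1 / t) *\<^sub>R x + z) - (1 / t) * a"
    using upper dominated_linear_graphD(4)[OF G xa] by blast
  then have "a + t * c \<le> t * p ((1 / t) *\<^sub>R x + z)"
    using greater by (simp add: field_simps)
  also have "\<dots> = p (x + t *\<^sub>R z)"
    using hom[of t "(1 / t) *\<^sub>R x + z"] greater by (simp add: algebra_simps)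
  finally show ?thesis .
next
  case less
  have "(1 / - t) * a - p ((1 / - t) *\<^sub>R x - z) \<le> c"
    using lower dominated_linear_graphD(4)[OF G xa] by blast
  then have "a + t * c \<le> (- t) * p ((1 / - t) *\<^sub>R x - z)"
    using less by (simp add: field_simps)
  also have "\<dots> = p (x + t *\<^sub>R z)"
    using hom[of "- t" "(1 / - t) *\<^sub>R x - z"] less by (simp add: algebra_simps)
  finally show ?thesis .
qed

lemma dominated_linear_graph_extend:
  fixes p :: "'a::real_vector \<Rightarrow> real"
  assumes sub: "\<And>x y. p (x + y) \<le> p x + p y"
    and hom: "\<And>r x. r \<ge> 0 \<Longrightarrow> p (r *\<^sub>R x) = r * p x"
    and G: "dominated_linear_graph p G" and z: "z \<notin> Domain G"
  obtains G' where "dominated_linear_graph p G'" "G \<subset> G'"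
proof -
  obtain c where lower: "\<And>y a. (y, a) \<in> G \<Longrightarrow> a - p (y - z) \<le> c"
    and upper: "\<And>y b. (y, b) \<in> G \<Longrightarrow> c \<le> p (y + z) - b"
    using dominated_linear_graph_extension_value[OF sub G] by blast
  define G' where "G' = {(x + t *\<^sub>R z, a + t * c) | x a t. (x, a) \<in> G}"
  note D = dominated_linear_graphD[OF G]
  have "dominated_linear_graph p G'" unfolding dominated_linear_graph_def
  proof (intro conjI allI impI)
    show "(0, 0) \<in> G'" unfolding G'_def using D(1) by force
  next
    fix x a b assume "(x, a) \<in> G'" "(x, b) \<in> G'"
    then obtain x1 a1 t1 x2 a2 t2 where h: "(x1, a1) \<in> G" "(x2, a2) \<in> G"
      "x = x1 + t1 *\<^sub>R z" "a = a1 + t1 * c" "x = x2 + t2 *\<^sub>R z" "b = a2 + t2 * c"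
      unfolding G'_def by blast
    then have "t1 = t2 \<and> x1 = x2"
      using dominated_linear_graph_decomposition_unique[OF G z h(1,2), of t1 t2] by simp
    then show "a = b" using h D(2) by auto
  next
    fix x y a b assume "(x, a) \<in> G'" "(y, b) \<in> G'"
    then obtain x1 a1 t1 x2 a2 t2 where h: "(x1, a1) \<in> G" "(x2, a2) \<in> G"
      "x = x1 + t1 *\<^sub>R z" "a = a1 + t1 * c" "y = x2 + t2 *\<^sub>R z" "b = a2 + t2 * c"
      unfolding G'_def by blast
    then have "(x + y, a + b) = ((x1 + x2) + (t1 + t2) *\<^sub>R z, (a1 + a2) + (t1 + t2) * c)"
      by (simp add: algebra_simps)
    then show "(x + y, a + b) \<in> G'" unfolding G'_def using D(3)[OF h(1,2)] by blast
  next
    fix x a r assume "(x, a) \<in> G'"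
    then obtain x1 a1 t where h: "(x1, a1) \<in> G" "x = x1 + t *\<^sub>R z" "a = a1 + t * c"
      unfolding G'_def by blast
    then have "(r *\<^sub>R x, r * a) = (r *\<^sub>R x1 + (r * t) *\<^sub>R z, r * a1 + (r * t) * c)"
      by (simp add: algebra_simps)
    then show "(r *\<^sub>R x, r * a) \<in> G'" unfolding G'_def using D(4)[OF h(1)] by blast
  next
    fix x a assume "(x, a) \<in> G'"
    then obtain x1 a1 t where "(x1, a1) \<in> G" "x = x1 + t *\<^sub>R z" "a = a1 + t * c"
      unfolding G'_def by blast
    then show "a \<le> p x" using extension_value_dominated[OF hom G lower upper] by blast
  qed
  moreover have "G \<subseteq> G'" unfolding G'_def by force
  moreover have "(z, c) \<in> G'" unfolding G'_def using D(1) by force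
  ultimately show thesis using that z by blast
qed

theorem hahn_banach_dominated_extension:
  fixes p :: "'a::real_vector \<Rightarrow> real"
  assumes sub: "\<And>x y. p (x + y) \<le> p x + p y"
    and hom: "\<And>r x. r \<ge> 0 \<Longrightarrow> p (r *\<^sub>R x) = r * p x"
    and G0: "dominated_linear_graph p G0"
  obtains \<psi> where "linear \<psi>" "\<And>x. \<psi> x \<le> p x" "\<And>x a. (x, a) \<in> G0 \<Longrightarrow> \<psi> x = a"
proof -
  let ?F = "{G. dominated_linear_graph p G \<and> G0 \<subseteq> G}"
  have "\<exists>M\<in>?F. \<forall>G\<in>?F. M \<subseteq> G \<longrightarrow> G = M"
  proof (rule subset_Zorn_nonempty)
    show "?F \<noteq> {}" using G0 by blast
  next
    fix \<C> assume "\<C> \<noteq> {}" and "subset.chain ?F \<C>"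
    then have "\<C> \<subseteq> ?F" and "\<forall>G\<in>\<C>. \<forall>H\<in>\<C>. G \<subseteq> H \<or> H \<subseteq> G"
      unfolding subset_chain_def by blast+
    then have "dominated_linear_graph p (\<Union>\<C>)"
      using dominated_linear_graph_Union[OF \<open>\<C> \<noteq> {}\<close>, of p] by blast
    moreover have "G0 \<subseteq> \<Union>\<C>" using \<open>\<C> \<noteq> {}\<close> \<open>\<C> \<subseteq> ?F\<close> by blast
    ultimately show "\<Union>\<C> \<in> ?F" by simp
  qed
  then obtain M where "M \<in> ?F" and maximal: "\<And>G. G \<in> ?F \<Longrightarrow> M \<subseteq> G \<Longrightarrow> G = M"
    by (elim bexE) blast
  then have M: "dominated_linear_graph p M" "G0 \<subseteq> M" by simp_all
  note D = dominated_linear_graphD[OF M(1)]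
  have total: "x \<in> Domain M" for x
  proof (rule ccontr)
    assume "x \<notin> Domain M"
    then obtain G where G: "dominated_linear_graph p G" "M \<subset> G"
      using dominated_linear_graph_extend[OF sub hom M(1)] by blast
    then have "G \<in> ?F" using M(2) by auto
    then have "G = M" using maximal G(2) by blast
    then show False using G(2) by simp
  qed
  define \<psi> where "\<psi> x = (THE a. (x, a) \<in> M)" for x
  have graph: "(x, \<psi> x) \<in> M" for x
  proof -
    obtain a where a: "(x, a) \<in> M" using total[of x] by blast
    then show ?thesis unfolding \<psi>_def by (rule theI) (erule D(2)[OF _ a])
  qed
  have graph_eq: "\<psi> x = a" if "(x, a) \<in> M" for x a
    using D(2)[OF that graph] by simp
  show thesis
  proof
    show "linear \<psi>"
      by (rule linearI) (simp_all add: graph_eq D(3,4) graph)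
    show "\<psi> x \<le> p x" for x using D(5)[OF graph] .
    show "\<psi> x = a" if "(x, a) \<in> G0" for x a using graph_eq M(2) that by blast
  qed
qed

corollary hahn_banach_sublinear:
  fixes p :: "'a::real_vector \<Rightarrow> real"
  assumes "\<And>x y. p (x + y) \<le> p x + p y" and "\<And>r x. r \<ge> 0 \<Longrightarrow> p (r *\<^sub>R x) = r * p x"
  obtains \<psi> where "linear \<psi>" "\<And>x. \<psi> x \<le> p x" "\<psi> z = p z"
proof -
  obtain \<psi> where "linear \<psi>" "\<And>x. \<psi> x \<le> p x"
    and on_ray: "\<And>x a. (x, a) \<in> range (\<lambda>t. (t *\<^sub>R z, t * p z)) \<Longrightarrow> \<psi> x = a"
    using hahn_banach_dominated_extension[OF assms dominated_linear_graph_ray[OF assms, of z]] by blast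
  moreover have "(z, p z) \<in> range (\<lambda>t. (t *\<^sub>R z, t * p z))"
    by (rule image_eqI[of _ _ 1]) simp_all
  ultimately show thesis using that[of \<psi>] by simp
qed

section \<open>Separation in locally convex spaces\<close>

lemma tvs_continuous_affine:
  assumes "topological_vector_space TYPE('a::{real_vector,topological_space})"
  shows "continuous_on UNIV (\<lambda>x::'a. c *\<^sub>R x + a)"
proof -
  have add: "continuous_on UNIV (\<lambda>p::'a \<times> 'a. fst p + snd p)"
    and mult: "continuous_on UNIV (\<lambda>p::real \<times> 'a. fst p *\<^sub>R snd p)"
    using assms unfolding topological_vector_space_def by auto
  have "continuous_on UNIV (\<lambda>x::'a. (c, x))" by (intro continuous_intros)
  from continuous_on_compose2[OF mult this] have "continuous_on UNIV (\<lambda>x::'a. c *\<^sub>R x)"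
    by simp
  then have "continuous_on UNIV (\<lambda>x::'a. (c *\<^sub>R x, a))" by (intro continuous_intros)
  from continuous_on_compose2[OF add this] show ?thesis by simp
qed

lemma tvs_continuous_ray:
  assumes "topological_vector_space TYPE('a::{real_vector,topological_space})"
  shows "continuous_on UNIV (\<lambda>t::real. t *\<^sub>R (x::'a))"
proof -
  have "continuous_on UNIV (\<lambda>p::real \<times> 'a. fst p *\<^sub>R snd p)"
    using assms unfolding topological_vector_space_def by auto
  moreover have "continuous_on UNIV (\<lambda>t::real. (t, x))" by (intro continuous_intros)
  ultimately show ?thesis using continuous_on_compose2 by fastforce
qed

lemma tvs_open_affine_preimage:
  fixes U :: "'a::{real_vector,topological_space} set"
  assumes "topological_vector_space TYPE('a)" and "open U"
  shows "open {x. c *\<^sub>R x + a \<in> U}"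
  using open_vimage[OF assms(2) tvs_continuous_affine[OF assms(1)]] by (simp add: vimage_def)

lemma tvs_open_ray_preimage:
  fixes U :: "'a::{real_vector,topological_space} set"
  assumes "topological_vector_space TYPE('a)" and "open U"
  shows "open {t::real. t *\<^sub>R x \<in> U}"
  using open_vimage[OF assms(2) tvs_continuous_ray[OF assms(1)]] by (simp add: vimage_def)

definition gauge_scales :: "'a::real_vector set \<Rightarrow> 'a \<Rightarrow> real set" where
  "gauge_scales N x = {t. t > 0 \<and> (1 / t) *\<^sub>R x \<in> N}"

definition minkowski_functional :: "'a::real_vector set \<Rightarrow> 'a \<Rightarrow> real" where
  "minkowski_functional N x = Inf (gauge_scales N x)"

locale open_convex_nbhd =
  fixes N :: "'a::{real_vector,topological_space} set"
  assumes tvs: "topological_vector_space TYPE('a)"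
    and N_open: "open N" and N_convex: "convex N" and zero_in_N: "0 \<in> N"
begin

lemma ray_scales_nbhd:
  assumes "s *\<^sub>R x \<in> N"
  obtains e where "e > 0" "\<And>s'. \<bar>s' - s\<bar> < e \<Longrightarrow> s' *\<^sub>R x \<in> N"
  using tvs_open_ray_preimage[OF tvs N_open, of x] assms unfolding open_real by blast

lemma gauge_scales_nonempty: "gauge_scales N x \<noteq> {}"
proof -
  obtain e where e: "e > 0" "\<And>s. \<bar>s - 0\<bar> < e \<Longrightarrow> s *\<^sub>R x \<in> N"
    using ray_scales_nbhd[of 0 x] zero_in_N by auto
  then have "2 / e \<in> gauge_scales N x" unfolding gauge_scales_def by simp
  then show ?thesis by blast
qed

lemma bdd_below_gauge_scales: "bdd_below (gauge_scales N x)"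
  unfolding gauge_scales_def bdd_below_def by (rule exI[of _ 0]) auto

lemma minkowski_functional_le: "t \<in> gauge_scales N x \<Longrightarrow> minkowski_functional N x \<le> t"
  unfolding minkowski_functional_def by (rule cInf_lower[OF _ bdd_below_gauge_scales])

lemma minkowski_functional_greatest:
  "(\<And>t. t \<in> gauge_scales N x \<Longrightarrow> c \<le> t) \<Longrightarrow> c \<le> minkowski_functional N x"
  unfolding minkowski_functional_def by (rule cInf_greatest[OF gauge_scales_nonempty])

lemma minkowski_functional_nonneg: "minkowski_functional N x \<ge> 0"
  by (rule minkowski_functional_greatest) (auto simp: gauge_scales_def)

lemma gauge_scales_upward_closed:
  assumes "t \<in> gauge_scales N x" "t \<le> t'"
  shows "t' \<in> gauge_scales N x"
proof -
  have t: "t > 0" "(1 / t) *\<^sub>R x \<in> N" using assms(1) unfolding gauge_scales_def by auto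
  have t': "t' > 0" using t assms(2) by simp
  have "(t / t') *\<^sub>R ((1 / t) *\<^sub>R x) + (1 - t / t') *\<^sub>R 0 \<in> N"
    using convexD[OF N_convex t(2) zero_in_N, of "t / t'" "1 - t / t'"] t t' assms(2) by simp
  moreover have "(t / t') * (1 / t) = 1 / t'" using t by simp
  then have "(t / t') *\<^sub>R ((1 / t) *\<^sub>R x) + (1 - t / t') *\<^sub>R 0 = (1 / t') *\<^sub>R x"
    by (simp only: scaleR_scaleR scaleR_zero_right add_0_right)
  ultimately have "(1 / t') *\<^sub>R x \<in> N" by metis
  then show ?thesis unfolding gauge_scales_def using t' by simp
qed

lemma minkowski_functional_scaleR_le:
  assumes "r > 0"
  shows "minkowski_functional N (r *\<^sub>R x) \<le> r * minkowski_functional N x"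
proof -
  have "minkowski_functional N (r *\<^sub>R x) / r \<le> minkowski_functional N x"
  proof (rule minkowski_functional_greatest)
    fix t assume "t \<in> gauge_scales N x"
    then have "r * t \<in> gauge_scales N (r *\<^sub>R x)"
      using assms unfolding gauge_scales_def by simp
    then have "minkowski_functional N (r *\<^sub>R x) \<le> r * t" by (rule minkowski_functional_le)
    then show "minkowski_functional N (r *\<^sub>R x) / r \<le> t" using assms by (simp add: field_simps)
  qed
  then show ?thesis using assms by (simp add: field_simps)
qed

lemma minkowski_functional_scaleR:
  assumes "r \<ge> 0"
  shows "minkowski_functional N (r *\<^sub>R x) = r * minkowski_functional N x"
proof (cases "r = 0")
  case True
  have "minkowski_functional N 0 \<le> t" if "t > 0" for t
    using that zero_in_N by (intro minkowski_functional_le) (simp add: gauge_scales_def)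
  then have "minkowski_functional N 0 \<le> 0"
    by (metis field_sum_of_halves half_gt_zero_iff less_add_same_cancel1 not_le)
  then show ?thesis using True minkowski_functional_nonneg[of 0] by simp
next
  case False
  then have r: "r > 0" using assms by simp
  have "minkowski_functional N x = minkowski_functional N ((1 / r) *\<^sub>R (r *\<^sub>R x))" using r by simp
  also have "\<dots> \<le> (1 / r) * minkowski_functional N (r *\<^sub>R x)"
    by (rule minkowski_functional_scaleR_le) (use r in simp)
  finally have "r * minkowski_functional N x \<le> minkowski_functional N (r *\<^sub>R x)"
    using r by (simp add: field_simps)
  with minkowski_functional_scaleR_le[OF r, of x] show ?thesis by simp
qed

lemma gauge_scales_add:
  assumes s: "s \<in> gauge_scales N x" and t: "t \<in> gauge_scales N y"
  shows "s + t \<in> gauge_scales N (x + y)"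
proof -
  have s': "s > 0" "(1 / s) *\<^sub>R x \<in> N" and t': "t > 0" "(1 / t) *\<^sub>R y \<in> N"
    using s t unfolding gauge_scales_def by auto
  have "(s / (s + t)) *\<^sub>R ((1 / s) *\<^sub>R x) + (t / (s + t)) *\<^sub>R ((1 / t) *\<^sub>R y) \<in> N"
  proof (rule convexD[OF N_convex s'(2) t'(2)])
    show "0 \<le> s / (s + t)" "0 \<le> t / (s + t)" using s' t' by auto
    show "s / (s + t) + t / (s + t) = 1" using s' t' by (simp add: add_divide_distrib[symmetric])
  qed
  moreover have "(s / (s + t)) *\<^sub>R ((1 / s) *\<^sub>R x) + (t / (s + t)) *\<^sub>R ((1 / t) *\<^sub>R y)
      = (1 / (s + t)) *\<^sub>R (x + y)"
    using s' t' by (simp add: scaleR_add_right)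
  ultimately show ?thesis unfolding gauge_scales_def using s' t' by simp
qed

lemma minkowski_functional_add_le:
  "minkowski_functional N (x + y) \<le> minkowski_functional N x + minkowski_functional N y"
proof -
  have "minkowski_functional N (x + y) - minkowski_functional N y \<le> minkowski_functional N x"
  proof (rule minkowski_functional_greatest)
    fix s assume s: "s \<in> gauge_scales N x"
    have "minkowski_functional N (x + y) - s \<le> minkowski_functional N y"
    proof (rule minkowski_functional_greatest)
      fix t assume "t \<in> gauge_scales N y"
      from minkowski_functional_le[OF gauge_scales_add[OF s this]]
      show "minkowski_functional N (x + y) - s \<le> t" by simp
    qed
    then show "minkowski_functional N (x + y) - minkowski_functional N y \<le> s" by simp
  qed
  then show ?thesis by simp
qed

lemma minkowski_functional_less_one:
  assumes "x \<in> N"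
  shows "minkowski_functional N x < 1"
proof -
  obtain e where e: "e > 0" "\<And>s. \<bar>s - 1\<bar> < e \<Longrightarrow> s *\<^sub>R x \<in> N"
    using ray_scales_nbhd[of 1 x] assms by auto
  then have "(1 + e / 2) *\<^sub>R x \<in> N" by simp
  then have "1 / (1 + e / 2) \<in> gauge_scales N x"
    unfolding gauge_scales_def using e(1) by simp
  then have "minkowski_functional N x \<le> 1 / (1 + e / 2)" by (rule minkowski_functional_le)
  also have "\<dots> < 1" using e(1) by simp
  finally show ?thesis .
qed

lemma minkowski_functional_ge_one:
  assumes "x \<notin> N"
  shows "minkowski_functional N x \<ge> 1"
proof (rule ccontr)
  assume "\<not> minkowski_functional N x \<ge> 1"
  then obtain t where "t \<in> gauge_scales N x" "t < 1"
    using cInf_lessD[OF gauge_scales_nonempty] unfolding minkowski_functional_def by force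
  then have "1 \<in> gauge_scales N x" using gauge_scales_upward_closed by simp
  then show False using assms unfolding gauge_scales_def by simp
qed

end

lemma zero_in_top_dual: "(\<lambda>_. 0) \<in> top_dual"
  unfolding top_dual_def by (simp add: linearI continuous_on_const)

lemma linear_continuous_if_bounded_on_nbhd:
  fixes \<psi> :: "'a::{real_vector,topological_space} \<Rightarrow> real"
  assumes tvs: "topological_vector_space TYPE('a)" and lin: "linear \<psi>"
    and W: "open W" "0 \<in> W" and bounded: "\<And>w. w \<in> W \<Longrightarrow> \<bar>\<psi> w\<bar> < 1"
  shows "continuous_on UNIV \<psi>"
proof -
  have "open (\<psi> -` S)" if S: "open S" for S
  proof (subst open_subopen, intro ballI)
    fix y assume "y \<in> \<psi> -` S"
    then obtain e where e: "e > 0" "\<And>s. \<bar>s - \<psi> y\<bar> < e \<Longrightarrow> s \<in> S"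
      using S unfolding open_real by blast
    define T where "T = {x. (1 / e) *\<^sub>R x + (- ((1 / e) *\<^sub>R y)) \<in> W}"
    have "open T" unfolding T_def by (rule tvs_open_affine_preimage[OF tvs W(1)])
    moreover have "y \<in> T" unfolding T_def using W(2) by simp
    moreover have "T \<subseteq> \<psi> -` S"
    proof
      fix x assume "x \<in> T"
      then have "\<bar>\<psi> ((1 / e) *\<^sub>R x + (- ((1 / e) *\<^sub>R y)))\<bar> < 1" unfolding T_def using bounded by blast
      moreover have "\<psi> ((1 / e) *\<^sub>R x + (- ((1 / e) *\<^sub>R y))) = (\<psi> x - \<psi> y) / e"
        by (simp add: linear_diff[OF lin] linear_scale[OF lin] diff_divide_distrib)
      ultimately have "\<bar>\<psi> x - \<psi> y\<bar> < e" using e(1) by (simp add: abs_divide divide_less_eq)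
      then show "x \<in> \<psi> -` S" using e(2) by simp
    qed
    ultimately show "\<exists>T. open T \<and> y \<in> T \<and> T \<subseteq> \<psi> -` S" by blast
  qed
  then show ?thesis using continuous_on_open_vimage[of UNIV \<psi>] by simp
qed

text \<open>The functional is obtained by Hahn--Banach below the Minkowski functional of \<open>N\<close>; it is
  continuous because it is bounded by \<open>1\<close> in absolute value on the neighbourhood \<open>N \<inter> -N\<close>.\<close>

lemma open_convex_point_separation:
  fixes N :: "'a::{real_vector,topological_space} set"
  assumes tvs: "topological_vector_space TYPE('a)"
    and N: "open N" "convex N" "0 \<in> N" and z: "z \<notin> N"
  obtains \<psi> where "\<psi> \<in> top_dual" "1 \<le> \<psi> z" "\<And>w. w \<in> N \<Longrightarrow> \<psi> w < 1"
proof -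
  interpret open_convex_nbhd N by unfold_locales (fact tvs N)+
  obtain \<psi> where lin: "linear \<psi>" and le: "\<And>x. \<psi> x \<le> minkowski_functional N x"
    and at_z: "\<psi> z = minkowski_functional N z"
    using hahn_banach_sublinear[of "minkowski_functional N"]
      minkowski_functional_add_le minkowski_functional_scaleR by blast
  have less_one: "\<psi> w < 1" if "w \<in> N" for w
    using le[of w] minkowski_functional_less_one[OF that] by simp
  define W where "W = N \<inter> {w. (- 1) *\<^sub>R w + 0 \<in> N}"
  have "open {w. (- 1) *\<^sub>R w + 0 \<in> N}" by (rule tvs_open_affine_preimage[OF tvs N(1)])
  then have W: "open W" "0 \<in> W" unfolding W_def using N by auto
  have "\<bar>\<psi> w\<bar> < 1" if "w \<in> W" for w
    using less_one[of w] less_one[of "- w"] that linear_neg[OF lin, of w] unfolding W_def by auto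
  then have "continuous_on UNIV \<psi>" by (rule linear_continuous_if_bounded_on_nbhd[OF tvs lin W])
  then show thesis
    using that lin less_one at_z minkowski_functional_ge_one[OF z] unfolding top_dual_def by simp
qed

text \<open>Separating \<open>x\<^sub>0\<close> from \<open>K\<close> amounts to separating \<open>k\<^sub>0 - x\<^sub>0\<close> from the open convex
  neighbourhood \<open>(k\<^sub>0 - K) + V\<close> of \<open>0\<close>, where \<open>V\<close> is a convex neighbourhood of \<open>0\<close> with
  \<open>(x\<^sub>0 + V) \<inter> K = {}\<close>.\<close>

lemma closed_convex_point_separation:
  fixes K :: "'a::{real_vector,topological_space} set"
  assumes tvs: "topological_vector_space TYPE('a)" and lc: "locally_convex TYPE('a)"
    and K: "convex K" "closed K" and x0: "x0 \<notin> K"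
  obtains \<psi> where "\<psi> \<in> top_dual" "\<And>k. k \<in> K \<Longrightarrow> \<psi> x0 < \<psi> k"
proof (cases "K = {}")
  case True
  then show thesis using that zero_in_top_dual by blast
next
  case False
  then obtain k0 where k0: "k0 \<in> K" by blast
  have "open {u. 1 *\<^sub>R u + x0 \<in> - K}" by (rule tvs_open_affine_preimage[OF tvs]) (use K(2) in auto)
  moreover have "0 \<in> {u. 1 *\<^sub>R u + x0 \<in> - K}" using x0 by simp
  ultimately obtain V where V: "open V" "convex V" "0 \<in> V" "V \<subseteq> {u. 1 *\<^sub>R u + x0 \<in> - K}"
    using lc unfolding locally_convex_def by blast
  define N where "N = {k0 - k + v | k v. k \<in> K \<and> v \<in> V}"
  have N_translates: "N = (\<Union>k\<in>K. {u. 1 *\<^sub>R u + (k - k0) \<in> V})"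
  proof (intro set_eqI iffI)
    fix u assume "u \<in> N"
    then obtain k v where "k \<in> K" "v \<in> V" "u = k0 - k + v" unfolding N_def by blast
    moreover from this have "1 *\<^sub>R u + (k - k0) = v" by (simp add: algebra_simps)
    ultimately show "u \<in> (\<Union>k\<in>K. {u. 1 *\<^sub>R u + (k - k0) \<in> V})" by (metis (mono_tags) UN_I mem_Collect_eq)
  next
    fix u assume "u \<in> (\<Union>k\<in>K. {u. 1 *\<^sub>R u + (k - k0) \<in> V})"
    then obtain k where "k \<in> K" "u + (k - k0) \<in> V" by auto
    moreover have "u = k0 - k + (u + (k - k0))" by (simp add: algebra_simps)
    ultimately show "u \<in> N" unfolding N_def by blast
  qed
  have "open N"
    unfolding N_translates by (intro open_UN ballI tvs_open_affine_preimage[OF tvs V(1)])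
  moreover have "N = (\<Union>a\<in>(+) k0 ` V. \<Union>k\<in>K. {a - k})"
  proof (intro set_eqI iffI)
    fix u assume "u \<in> N"
    then obtain k v where "k \<in> K" "v \<in> V" "u = (k0 + v) - k" unfolding N_def by (force simp: algebra_simps)
    then show "u \<in> (\<Union>a\<in>(+) k0 ` V. \<Union>k\<in>K. {a - k})" by blast
  next
    fix u assume "u \<in> (\<Union>a\<in>(+) k0 ` V. \<Union>k\<in>K. {a - k})"
    then obtain k v where "k \<in> K" "v \<in> V" "u = (k0 + v) - k" by blast
    then have "u = k0 - k + v" "k \<in> K" "v \<in> V" by (simp_all add: algebra_simps)
    then show "u \<in> N" unfolding N_def by blast
  qed
  then have "convex N" using convex_differences[OF convex_translation[OF V(2)] K(1)] by simp
  moreover have "0 \<in> N" unfolding N_def using k0 V(3) by force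
  moreover have "k0 - x0 \<notin> N"
  proof
    assume "k0 - x0 \<in> N"
    then obtain k v where "k \<in> K" "v \<in> V" "k0 - x0 = k0 - k + v" unfolding N_def by blast
    then have "v + x0 = k" by (simp add: algebra_simps)
    then show False using V(4) \<open>v \<in> V\<close> \<open>k \<in> K\<close> by auto
  qed
  ultimately obtain \<psi> where \<psi>: "\<psi> \<in> top_dual" "1 \<le> \<psi> (k0 - x0)" "\<And>w. w \<in> N \<Longrightarrow> \<psi> w < 1"
    using open_convex_point_separation[OF tvs] by blast
  have lin: "linear \<psi>" using \<psi>(1) unfolding top_dual_def by simp
  have "\<psi> x0 < \<psi> k" if "k \<in> K" for k
  proof -
    have "k0 - k + 0 \<in> N" unfolding N_def using that V(3) by blast
    then have "\<psi> (k0 - k) < 1" using \<psi>(3) by simp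
    then show ?thesis using \<psi>(2) by (simp add: linear_diff[OF lin])
  qed
  then show thesis using that \<psi>(1) by blast
qed

section \<open>Dual representation of the risk measure\<close>

lemma quasiconvex_sublevel_convex:
  assumes "quasiconvex_fun f"
  shows "convex {X. f X \<le> c}"
proof (rule convexI)
  fix X Y and u v :: real
  assume X: "X \<in> {X. f X \<le> c}" and Y: "Y \<in> {X. f X \<le> c}" and uv: "0 \<le> u" "0 \<le> v" "u + v = 1"
  have "f (u *\<^sub>R X + (1 - u) *\<^sub>R Y) \<le> max (f X) (f Y)"
    using assms uv unfolding quasiconvex_fun_def by simp
  also have "\<dots> \<le> c" using X Y by simp
  finally have "f (u *\<^sub>R X + (1 - u) *\<^sub>R Y) \<le> c" .
  moreover have "v = 1 - u" using uv(3) by simp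
  ultimately show "u *\<^sub>R X + v *\<^sub>R Y \<in> {X. f X \<le> c}" by simp
qed

lemma risk_measure_le_cost:
  assumes "x \<in> P" and "X + V1 x \<in> A"
  shows "risk_measure P V0 V1 A X \<le> ereal (V0 x)"
  unfolding risk_measure_def by (rule Inf_lower) (use assms in blast)

lemma risk_measure_lessE:
  assumes "risk_measure P V0 V1 A X < c"
  obtains x where "x \<in> P" "X + V1 x \<in> A" "ereal (V0 x) < c"
  using assms unfolding risk_measure_def by (auto simp: Inf_less_iff)

lemma barrier_coneI:
  assumes "\<psi> \<in> top_dual" and "\<And>a. a \<in> A \<Longrightarrow> b \<le> \<psi> a"
  shows "\<psi> \<in> barrier_cone A"
proof -
  have "ereal b \<le> support_inf A \<psi>"
    unfolding support_inf_def by (rule INF_greatest) (simp add: assms(2))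
  then show ?thesis using assms(1) unfolding barrier_cone_def by auto
qed

lemma zero_in_barrier_cone: "(\<lambda>_. 0) \<in> barrier_cone A"
  by (rule barrier_coneI[OF zero_in_top_dual, of _ 0]) simp

lemma cond_risk_le: "cond_risk \<rho> X \<psi> \<le> \<rho> X"
  unfolding cond_risk_def by (rule Inf_lower) blast

lemma cond_risk_geI:
  assumes "\<And>Y. \<psi> Y \<le> \<psi> X \<Longrightarrow> c \<le> \<rho> Y"
  shows "c \<le> cond_risk \<rho> X \<psi>"
  unfolding cond_risk_def by (rule Inf_greatest) (use assms in blast)

lemma ereal_le_SUP_if_approx:
  fixes a :: ereal
  assumes "\<And>c. ereal c < a \<Longrightarrow> \<exists>i\<in>I. ereal c \<le> f i"
  shows "a \<le> (SUP i\<in>I. f i)"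
proof (rule ccontr)
  assume "\<not> a \<le> (SUP i\<in>I. f i)"
  then obtain c where c: "(SUP i\<in>I. f i) < ereal c" "ereal c < a"
    using ereal_dense2 by (meson not_le)
  then obtain i where "i \<in> I" "ereal c \<le> f i" using assms by blast
  then show False using c(1) SUP_upper[of i I f] by simp
qed

lemma risk_measure_approx_by_cond_risk:
  fixes A :: "'a::{real_vector,topological_space} set"
    and P :: "(real^'n::finite) set" and V0 :: "real^'n \<Rightarrow> real" and V1 :: "real^'n \<Rightarrow> 'a"
  defines "\<rho> \<equiv> risk_measure P V0 V1 A"
  assumes tvs: "topological_vector_space TYPE('a)" and lc: "locally_convex TYPE('a)"
    and qc: "quasiconvex_fun \<rho>" and lsc: "lsc_fun \<rho>" and level: "ereal c < \<rho> X"
  obtains \<psi> where "\<psi> \<in> barrier_cone A" "ereal c \<le> cond_risk \<rho> X \<psi>"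
proof (cases "\<exists>Y. \<rho> Y < ereal c")
  case False
  then have "ereal c \<le> cond_risk \<rho> X (\<lambda>_. 0)" by (intro cond_risk_geI) (simp add: not_less)
  then show thesis using that zero_in_barrier_cone by blast
next
  case True
  then obtain x where x: "x \<in> P" "ereal (V0 x) < ereal c"
    unfolding \<rho>_def by (blast elim: risk_measure_lessE)
  define K where "K = {Y. \<rho> Y \<le> ereal c}"
  have "convex K" unfolding K_def by (rule quasiconvex_sublevel_convex[OF qc])
  moreover have "closed K" using lsc unfolding K_def lsc_fun_def by blast
  moreover have "X \<notin> K" using level unfolding K_def by simp
  ultimately obtain \<psi> where \<psi>: "\<psi> \<in> top_dual" and separates: "\<And>k. k \<in> K \<Longrightarrow> \<psi> X < \<psi> k"
    using closed_convex_point_separation[OF tvs lc] by blast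
  have lin: "linear \<psi>" using \<psi> unfolding top_dual_def by simp
  have "a - V1 x \<in> K" if "a \<in> A" for a
  proof -
    have "\<rho> (a - V1 x) \<le> ereal (V0 x)"
      using risk_measure_le_cost[of x P "a - V1 x" V1 A V0] x(1) that unfolding \<rho>_def by simp
    also have "\<dots> \<le> ereal c" using x(2) by simp
    finally show ?thesis unfolding K_def by simp
  qed
  then have "\<psi> X + \<psi> (V1 x) \<le> \<psi> a" if "a \<in> A" for a
    using separates[of "a - V1 x"] that by (simp add: linear_diff[OF lin])
  then have "\<psi> \<in> barrier_cone A" by (rule barrier_coneI[OF \<psi>])
  moreover have "ereal c \<le> cond_risk \<rho> X \<psi>"
  proof (rule cond_risk_geI)
    fix Y assume "\<psi> Y \<le> \<psi> X"
    then have "Y \<notin> K" using separates by force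
    then show "ereal c \<le> \<rho> Y" unfolding K_def by simp
  qed
  ultimately show thesis using that by blast
qed

theorem mainTheorem19:
  fixes C :: "'a::{real_vector,topological_space} set"
    and P :: "(real^'n::finite) set"
    and V0 :: "real^'n \<Rightarrow> real"
    and V1 :: "real^'n \<Rightarrow> 'a"
    and A :: "'a set"
  assumes tvs: "topological_vector_space TYPE('a)"
    and lc: "locally_convex TYPE('a)"
    and cone_C: "convex C" "cone C" "0 \<in> C"
    and P0: "0 \<in> P"
    and V0_0: "V0 0 = 0" and V0_ineq: "\<And>x. V0 x \<ge> - V0 (- x)"
    and V1_0: "V1 0 = 0" and V1_ineq: "\<And>x. cone_le C (V1 x) (- V1 (- x))"
    and A0: "0 \<in> A" and A_mono: "\<And>X Z. X \<in> A \<Longrightarrow> Z \<in> C \<Longrightarrow> X + Z \<in> A"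
    and proper: "proper_risk (risk_measure P V0 V1 A)"
    and qc: "quasiconvex_fun (risk_measure P V0 V1 A)"
    and lsc: "lsc_fun (risk_measure P V0 V1 A)"
  shows "barrier_cone A \<noteq> {} \<and>
    (\<forall>X. risk_measure P V0 V1 A X =
           (SUP \<psi>\<in>barrier_cone A. cond_risk (risk_measure P V0 V1 A) X \<psi>))"
proof (intro conjI allI antisym)
  show "barrier_cone A \<noteq> {}" using zero_in_barrier_cone by blast
next
  fix X
  show "risk_measure P V0 V1 A X \<le> (SUP \<psi>\<in>barrier_cone A. cond_risk (risk_measure P V0 V1 A) X \<psi>)"
    using risk_measure_approx_by_cond_risk[OF tvs lc qc lsc]
    by (intro ereal_le_SUP_if_approx) blast
  show "(SUP \<psi>\<in>barrier_cone A. cond_risk (risk_measure P V0 V1 A) X \<psi>) \<le> risk_measure P V0 V1 A X"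
    by (rule SUP_least) (rule cond_risk_le)
qed

end
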